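(* Let $r\in[0,\tfrac12]$. For every family of projective measurements $\{M_{a|x}\}_{a,x}$ on Alice's qubit, the assemblage generated from the Werner state $\omega_r$ by this family admits an LHS model of size $N(r)$ (whenever $N(r)<\infty$). Moreover, $\gamma(\omega_r)\ge N(r)$.
   Context: Notation: $\vec\sigma=(\sigma_x,\sigma_y,\sigma_z)$ is the vector of Pauli matrices, $\mathbb{I}$ the identity. A qubit POVM is a finite family $\{\Pi_i\}_{i=1}^n$ of positive semidefinite $2\times2$ operators summing to $\mathbb{I}$ (an "$n$-outcome POVM"). A POVM $\{\Pi_i\}_{i=1}^n$ simulates a family of POVMs $\{M_{a|x}\}_{a,x}$ if there exist numbers $p(a|x,i)\ge0$ with $\sum_a p(a|x,i)=1$ such that $M_{a|x}=\sum_{i=1}^n p(a|x,i)\Pi_i$ for all $a,x$. For $r\in[0,1]$, $\mathcal{P}_r$ is the family of all two-outcome POVMs $\{M_{+|r\hat n},M_{-|r\hat n}\}$, $M_{\pm|r\hat n}=\tfrac12(\mathbb{I}\pm r\,\hat n\cdot\vec\sigma)$, over all unit vectors $\hat n\in\mathbb{R}^3$. $N(r)$ is the smallest $n$ such that some $n$-outcome qubit POVM simulates $\mathcal{P}_r$ ($N(r)=+\infty$ if none exists). The two-qubit Werner state is $\omega_r=r|\Psi^-\rangle\langle\Psi^-|+(1-r)\mathbb{I}\otimes\mathbb{I}/4$ with $|\Psi^-\rangle=(|01\rangle-|10\rangle)/\sqrt2$. Given a bipartite state $\rho_{AB}$ and a family of POVMs $\{M_{a|x}\}$ on $A$ (arbitrary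 input set, finitely many outcomes each), the generated assemblage is $\sigma_{a|x}=\mathrm{Tr}_A[(M_{a|x}\otimes\mathbb{I})\rho_{AB}]$. An LHS model of size $n$ for it consists of a probability distribution $p(i)$ on $\{1,\dots,n\}$, states $\rho_i$ on $B$, and conditional probabilities $p(a|x,i)$ with $\sigma_{a|x}=\sum_{i=1}^n p(a|x,i)p(i)\rho_i$ for all $a,x$. $\gamma(\rho_{AB})\in\{1,2,\dots\}\cup\{+\infty\}$ is the smallest $n$ such that every assemblage generated from $\rho_{AB}$ by any family of POVMs on $A$ admits an LHS model of size $n$. *)

theory Defs
  imports "HOL-Analysis.Analysis" "HOL-Library.Extended_Nat"
begin

text \<open>A qubit operator is
  indexed by bool (False = |0>, True = |1>); a two-qubit operator by bool \<times> bool,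
  where the first component is Alice's qubit A and the second Bob's qubit B.\<close>

type_synonym 'i op = "'i \<Rightarrow> 'i \<Rightarrow> complex"
type_synonym qop = "bool op"
type_synonym qop2 = "(bool \<times> bool) op"

definition idop :: "('i::finite) op" where
  "idop = (\<lambda>i j. if i = j then 1 else 0)"

definition opadd :: "('i::finite) op \<Rightarrow> 'i op \<Rightarrow> 'i op" where
  "opadd A B = (\<lambda>i j. A i j + B i j)"

definition opscale :: "complex \<Rightarrow> ('i::finite) op \<Rightarrow> 'i op" where
  "opscale c A = (\<lambda>i j. c * A i j)"

definition opmult :: "('i::finite) op \<Rightarrow> 'i op \<Rightarrow> 'i op" where
  "opmult A B = (\<lambda>i j. \<Sum>l\<in>UNIV. A i l * B l j)"

definition optrace :: "('i::finite) op \<Rightarrow> complex" where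
  "optrace A = (\<Sum>i\<in>UNIV. A i i)"

definition psd :: "('i::finite) op \<Rightarrow> bool" where
  "psd A \<longleftrightarrow> (\<forall>v :: 'i \<Rightarrow> complex.
      (\<Sum>i\<in>UNIV. \<Sum>j\<in>UNIV. cnj (v i) * A i j * v j) \<in> \<real> \<and>
      0 \<le> Re (\<Sum>i\<in>UNIV. \<Sum>j\<in>UNIV. cnj (v i) * A i j * v j))"

definition is_state :: "('i::finite) op \<Rightarrow> bool" where
  "is_state \<rho> \<longleftrightarrow> psd \<rho> \<and> optrace \<rho> = 1"

definition tensor :: "qop \<Rightarrow> qop \<Rightarrow> qop2" where
  "tensor A B = (\<lambda>(i, j) (i', j'). A i i' * B j j')"

definition ptrace_A :: "qop2 \<Rightarrow> qop" where
  "ptrace_A X = (\<lambda>j j'. \<Sum>i\<in>UNIV. X (i, j) (i, j'))"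

definition sigma_x :: qop where
  "sigma_x = (\<lambda>i j. if i \<noteq> j then 1 else 0)"

definition sigma_y :: qop where
  "sigma_y = (\<lambda>i j. if i = False \<and> j = True then - \<i>
                    else if i = True \<and> j = False then \<i> else 0)"

definition sigma_z :: qop where
  "sigma_z = (\<lambda>i j. if i = j then (if i then -1 else 1) else 0)"

definition ndotsigma :: "real^3 \<Rightarrow> qop" where
  "ndotsigma n = (\<lambda>i j. complex_of_real (n$1) * sigma_x i j
                      + complex_of_real (n$2) * sigma_y i j
                      + complex_of_real (n$3) * sigma_z i j)"

definition is_povm :: "nat \<Rightarrow> (nat \<Rightarrow> ('i::finite) op) \<Rightarrow> bool" where
  "is_povm n P \<longleftrightarrow> (\<forall>i<n. psd (P i)) \<and> (\<lambda>a b. \<Sum>i<n. P i a b) = idop"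

definition povm_family :: "'x set \<Rightarrow> ('x \<Rightarrow> nat) \<Rightarrow> ('x \<Rightarrow> nat \<Rightarrow> qop) \<Rightarrow> bool" where
  "povm_family X k M \<longleftrightarrow> (\<forall>x\<in>X. is_povm (k x) (M x))"

definition projective_family :: "'x set \<Rightarrow> ('x \<Rightarrow> nat) \<Rightarrow> ('x \<Rightarrow> nat \<Rightarrow> qop) \<Rightarrow> bool" where
  "projective_family X k M \<longleftrightarrow> povm_family X k M \<and>
     (\<forall>x\<in>X. \<forall>a<k x. opmult (M x a) (M x a) = M x a)"

text \<open>M_{+-|r n} = (I +- r n.sigma)/2; True encodes +, False encodes -.\<close>
definition Pr_elem :: "real \<Rightarrow> real^3 \<Rightarrow> bool \<Rightarrow> qop" where
  "Pr_elem r n s = (\<lambda>i j. (idop i j + (if s then 1 else -1) * complex_of_real r * ndotsigma n i j) / 2)"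

definition simulates_Pr :: "real \<Rightarrow> nat \<Rightarrow> (nat \<Rightarrow> qop) \<Rightarrow> bool" where
  "simulates_Pr r n Pv \<longleftrightarrow> is_povm n Pv \<and>
     (\<exists>p :: real^3 \<Rightarrow> bool \<Rightarrow> nat \<Rightarrow> real.
        \<forall>m::real^3. norm m = 1 \<longrightarrow>
          (\<forall>i<n. (\<forall>s. 0 \<le> p m s i) \<and> p m True i + p m False i = 1) \<and>
          (\<forall>s. Pr_elem r m s = (\<lambda>a b. \<Sum>i<n. complex_of_real (p m s i) * Pv i a b)))"

text \<open>N(r) in enat; Inf of the empty set is infinity.\<close>
definition N_sim :: "real \<Rightarrow> enat" where
  "N_sim r = (INF n\<in>{n. n \<ge> 1 \<and> (\<exists>Pv. simulates_Pr r n Pv)}. enat n)"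

definition psi_minus :: "bool \<times> bool \<Rightarrow> complex" where
  "psi_minus = (\<lambda>(i, j). if \<not> i \<and> j then 1 / sqrt 2
                         else if i \<and> \<not> j then - 1 / sqrt 2 else 0)"

definition werner :: "real \<Rightarrow> qop2" where
  "werner r = (\<lambda>u v. complex_of_real r * (psi_minus u * cnj (psi_minus v))
                     + complex_of_real (1 - r) * idop u v / 4)"

definition assemblage :: "qop2 \<Rightarrow> ('x \<Rightarrow> nat \<Rightarrow> qop) \<Rightarrow> 'x \<Rightarrow> nat \<Rightarrow> qop" where
  "assemblage \<rho> M x a = ptrace_A (opmult (tensor (M x a) idop) \<rho>)"

definition has_LHS_model :: "qop2 \<Rightarrow> 'x set \<Rightarrow> ('x \<Rightarrow> nat) \<Rightarrow> ('x \<Rightarrow> nat \<Rightarrow> qop) \<Rightarrow> nat \<Rightarrow> bool" where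
  "has_LHS_model \<rho> X k M n \<longleftrightarrow>
     (\<exists>(p :: nat \<Rightarrow> real) (\<rho>B :: nat \<Rightarrow> qop) (q :: 'x \<Rightarrow> nat \<Rightarrow> nat \<Rightarrow> real).
        (\<forall>i<n. 0 \<le> p i) \<and> (\<Sum>i<n. p i) = 1 \<and>
        (\<forall>i<n. is_state (\<rho>B i)) \<and>
        (\<forall>x\<in>X. \<forall>i<n. (\<forall>a<k x. 0 \<le> q x a i) \<and> (\<Sum>a<k x. q x a i) = 1) \<and>
        (\<forall>x\<in>X. \<forall>a<k x. assemblage \<rho> M x a =
            (\<lambda>b b'. \<Sum>i<n. complex_of_real (q x a i * p i) * \<rho>B i b b')))"

text \<open>Inputs are indexed by the type nat \<times> (nat \<Rightarrow> qop): an input can be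
  taken to be the POVM (k, M) itself, so an arbitrary input set X of this type
  covers every family of POVMs up to repetition of inputs (which does not affect
  the existence of LHS models).\<close>
definition gamma :: "qop2 \<Rightarrow> enat" where
  "gamma \<rho> = (INF n\<in>{n. n \<ge> 1 \<and>
       (\<forall>(X :: (nat \<times> (nat \<Rightarrow> qop)) set) k M. povm_family X k M \<longrightarrow> has_LHS_model \<rho> X k M n)}.
     enat n)"

end

theory Submission
  imports Defs
begin

text \<open>A qubit projector is 0, the identity, or a rank-one projector \<open>(I + m\<cdot>\<sigma>)/2\<close>, and the
  singlet part of \<open>\<omega>\<^sub>r\<close> steers Bob to \<open>(I - r m\<cdot>\<sigma>)/4\<close> when Alice's effect is
  \<open>(I + m\<cdot>\<sigma>)/2\<close>. Hence every projective assemblage of \<open>\<omega>\<^sub>r\<close> is built from the elements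
  \<open>M\<^sub>-\<^sub>|\<^sub>r\<^sub>m/2\<close> of \<open>\<P>\<^sub>r\<close>: an \<open>n\<close>-outcome POVM \<open>{\<Pi>\<^sub>i}\<close> simulating \<open>\<P>\<^sub>r\<close> gives an LHS model
  of size \<open>n\<close> with hidden states \<open>\<Pi>\<^sub>i / tr \<Pi>\<^sub>i\<close> and weights \<open>tr \<Pi>\<^sub>i / 2\<close>. Conversely, an LHS model
  of size \<open>n\<close> for the sharp qubit measurements yields the simulating POVM \<open>\<Pi>\<^sub>i = 2 p\<^sub>i \<rho>\<^sub>i\<close>,
  so \<open>N(r) \<le> \<gamma>(\<omega>\<^sub>r)\<close>.\<close>

section \<open>Qubit operators\<close>

lemma sum_UNIV_bool: "(\<Sum>l\<in>(UNIV::bool set). f l) = f False + f True"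
  by (simp add: UNIV_bool)

lemma sum_UNIV_bool_pair:
  "(\<Sum>l\<in>(UNIV::(bool \<times> bool) set). f l) = f (False, False) + f (False, True) + f (True, False) + f (True, True)"
  by (simp add: UNIV_bool UNIV_Times_UNIV[symmetric] add.assoc del: UNIV_Times_UNIV)

lemma optrace_qop: "optrace (A::qop) = A False False + A True True"
  by (simp add: optrace_def sum_UNIV_bool)

lemma optrace_idop: "optrace (idop :: qop) = 2"
  by (simp add: optrace_qop idop_def)

lemma optrace_zero: "optrace (\<lambda>_ _. 0 :: complex) = 0"
  by (simp add: optrace_def)

lemma qop_eq_iff:
  "(A::qop) = B \<longleftrightarrow> A False False = B False False \<and> A False True = B False True \<and>
     A True False = B True False \<and> A True True = B True True"
  by (auto simp: fun_eq_iff all_bool_eq)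

lemma norm_vec3: "norm (m::real^3) = sqrt ((m$1)^2 + (m$2)^2 + (m$3)^2)"
  by (simp add: norm_vec_def L2_set_def sum_3)

definition hermitian :: "qop \<Rightarrow> bool" where
  "hermitian A \<longleftrightarrow> (\<forall>i j. A j i = cnj (A i j))"

lemma hermitian_cnj: "hermitian A \<Longrightarrow> cnj (A i j) = A j i"
  unfolding hermitian_def by (metis complex_cnj_cnj)

lemma psd_quadratic_form:
  assumes "psd (A::qop)"
  shows "(\<Sum>i\<in>UNIV. \<Sum>j\<in>UNIV. cnj (v i) * A i j * v j) \<in> \<real>"
    and "0 \<le> Re (\<Sum>i\<in>UNIV. \<Sum>j\<in>UNIV. cnj (v i) * A i j * v j)"
  using assms unfolding psd_def by blast+

lemma psd_diag:
  assumes "psd (A::qop)" shows "A i i \<in> \<real>" "0 \<le> Re (A i i)"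
proof -
  let ?v = "\<lambda>j::bool. if j = i then 1 else (0::complex)"
  have "(\<Sum>k\<in>UNIV. \<Sum>j\<in>UNIV. cnj (?v k) * A k j * ?v j) = A i i"
    by (cases i) (simp_all add: sum_UNIV_bool)
  then show "A i i \<in> \<real>" "0 \<le> Re (A i i)"
    using psd_quadratic_form[OF assms, of ?v] by simp_all
qed

lemma psd_trace_real: "psd (A::qop) \<Longrightarrow> optrace A = complex_of_real (Re (optrace A))"
  using psd_diag(1)[of A False] psd_diag(1)[of A True]
  by (simp add: optrace_qop complex_is_Real_iff complex_eq_iff)

lemma psd_hermitian:
  assumes "psd (A::qop)" shows "hermitian A"
proof -
  let ?v1 = "\<lambda>j::bool. (1::complex)"
  let ?v2 = "\<lambda>j::bool. if j then \<i> else (1::complex)"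
  have "(\<Sum>k\<in>UNIV. \<Sum>j\<in>UNIV. cnj (?v1 k) * A k j * ?v1 j) \<in> \<real>"
       "(\<Sum>k\<in>UNIV. \<Sum>j\<in>UNIV. cnj (?v2 k) * A k j * ?v2 j) \<in> \<real>"
    by (rule psd_quadratic_form(1)[OF assms])+
  moreover have "Im (A False False) = 0" "Im (A True True) = 0"
    using psd_diag(1)[OF assms] by (auto simp: complex_is_Real_iff)
  ultimately have "A True False = cnj (A False True)"
    by (auto simp: sum_UNIV_bool complex_is_Real_iff algebra_simps complex_eq_iff)
  with \<open>Im (A False False) = 0\<close> \<open>Im (A True True) = 0\<close> show ?thesis
    unfolding hermitian_def all_bool_eq by (auto simp: complex_eq_iff)
qed

text \<open>For a Hermitian idempotent, \<open>\<langle>v, P v\<rangle> = \<parallel>P v\<parallel>\<^sup>2\<close>.\<close>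
lemma hermitian_idempotent_psd:
  assumes h: "hermitian (P::qop)" and i: "opmult P P = P" shows "psd P"
  unfolding psd_def
proof
  fix v :: "bool \<Rightarrow> complex"
  define w where "w l = (\<Sum>j\<in>UNIV. P l j * v j)" for l
  have gram: "P i j = (\<Sum>l\<in>UNIV. cnj (P l i) * P l j)" for i j
  proof -
    have "P i j = opmult P P i j" using i by simp
    also have "\<dots> = (\<Sum>l\<in>UNIV. cnj (P l i) * P l j)"
      by (simp add: opmult_def hermitian_cnj[OF h])
    finally show ?thesis .
  qed
  have "(\<Sum>i\<in>UNIV. \<Sum>j\<in>UNIV. cnj (v i) * P i j * v j)
      = (\<Sum>i\<in>UNIV. \<Sum>j\<in>UNIV. cnj (v i) * (\<Sum>l\<in>UNIV. cnj (P l i) * P l j) * v j)"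
    by (simp only: gram[symmetric])
  also have "\<dots> = (\<Sum>l\<in>UNIV. w l * cnj (w l))"
    unfolding w_def by (simp add: sum_UNIV_bool algebra_simps)
  also have "\<dots> = of_real (\<Sum>l\<in>UNIV. (norm (w l))^2)"
    by (simp add: complex_norm_square of_real_sum del: of_real_power)
  finally have q: "(\<Sum>i\<in>UNIV. \<Sum>j\<in>UNIV. cnj (v i) * P i j * v j) = of_real (\<Sum>l\<in>UNIV. (norm (w l))^2)" .
  have "0 \<le> (\<Sum>l\<in>UNIV. (norm (w l))^2)"
    by (rule sum_nonneg) simp
  then show "(\<Sum>i\<in>UNIV. \<Sum>j\<in>UNIV. cnj (v i) * P i j * v j) \<in> \<real> \<and>
      0 \<le> Re (\<Sum>i\<in>UNIV. \<Sum>j\<in>UNIV. cnj (v i) * P i j * v j)"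
    unfolding q by simp
qed

lemma psd_idop: "psd (idop :: qop)"
  by (rule hermitian_idempotent_psd)
     (simp_all add: hermitian_def idop_def opmult_def fun_eq_iff sum_UNIV_bool)

lemma psd_scale:
  assumes "psd (A::qop)" "0 \<le> c" shows "psd (\<lambda>i j. complex_of_real c * A i j)"
  unfolding psd_def
proof
  fix v :: "bool \<Rightarrow> complex"
  have e: "(\<Sum>i\<in>UNIV. \<Sum>j\<in>UNIV. cnj (v i) * (complex_of_real c * A i j) * v j)
      = complex_of_real c * (\<Sum>i\<in>UNIV. \<Sum>j\<in>UNIV. cnj (v i) * A i j * v j)"
    by (simp add: sum_distrib_left algebra_simps)
  have "(\<Sum>i\<in>UNIV. \<Sum>j\<in>UNIV. cnj (v i) * A i j * v j) \<in> \<real>"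
       "0 \<le> Re (\<Sum>i\<in>UNIV. \<Sum>j\<in>UNIV. cnj (v i) * A i j * v j)"
    using psd_quadratic_form[OF assms(1)] by blast+
  with assms(2) show "(\<Sum>i\<in>UNIV. \<Sum>j\<in>UNIV. cnj (v i) * (complex_of_real c * A i j) * v j) \<in> \<real> \<and>
      0 \<le> Re (\<Sum>i\<in>UNIV. \<Sum>j\<in>UNIV. cnj (v i) * (complex_of_real c * A i j) * v j)"
    unfolding e by (auto simp: complex_is_Real_iff)
qed

lemma psd_trace_zero:
  assumes "psd (A::qop)" "optrace A = 0" shows "A = (\<lambda>_ _. 0)"
proof -
  have diag: "A False False = 0" "A True True = 0"
    using psd_diag[OF assms(1), of False] psd_diag[OF assms(1), of True] assms(2)
    by (auto simp: optrace_qop complex_is_Real_iff complex_eq_iff)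
  have h: "A True False = cnj (A False True)"
    using hermitian_cnj[OF psd_hermitian[OF assms(1)]] by simp
  let ?v = "\<lambda>j::bool. if j then - cnj (A False True) else 1"
  have "0 \<le> Re (\<Sum>k\<in>UNIV. \<Sum>j\<in>UNIV. cnj (?v k) * A k j * ?v j)"
    by (rule psd_quadratic_form(2)[OF assms(1)])
  then have "(Re (A False True))\<^sup>2 + (Im (A False True))\<^sup>2 \<le> 0"
    using diag h by (simp add: sum_UNIV_bool algebra_simps power2_eq_square)
  then have "A False True = 0"
    by (simp add: sum_power2_le_zero_iff complex_eq_iff)
  with diag h show ?thesis by (simp add: fun_eq_iff all_bool_eq)
qed

text \<open>Inverts \<open>m \<mapsto> (I + m\<cdot>\<sigma>)/2\<close> on Hermitian operators of trace one.\<close>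
definition bloch :: "qop \<Rightarrow> real^3" where
  "bloch P = vector [2 * Re (P False True), - 2 * Im (P False True), 2 * Re (P False False) - 1]"

lemma hermitian_entries:
  assumes "hermitian P"
  obtains a d x y where "P False False = complex_of_real a" "P True True = complex_of_real d"
    "P False True = Complex x y" "P True False = Complex x (- y)"
proof
  have h: "cnj (P i j) = P j i" for i j using hermitian_cnj[OF assms] .
  show "P False False = complex_of_real (Re (P False False))" "P True True = complex_of_real (Re (P True True))"
    using h[of False False] h[of True True] by (simp_all add: complex_eq_iff)
  show "P False True = Complex (Re (P False True)) (Im (P False True))" by simp
  show "P True False = Complex (Re (P False True)) (- Im (P False True))"
    using h[of False True] by (simp add: complex_eq_iff)
qed

lemma projector_cases:
  assumes h: "hermitian P" and idem: "opmult P P = P"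
  shows "(optrace P = 1 \<and> norm (bloch P) = 1) \<or> P = (\<lambda>_ _. 0) \<or> P = idop"
proof -
  obtain a d x y where e: "P False False = complex_of_real a" "P True True = complex_of_real d"
    "P False True = Complex x y" "P True False = Complex x (- y)"
    using hermitian_entries[OF h] .
  have q: "opmult P P u v = P u v" for u v using idem by simp
  have aa: "a * a + (x * x + y * y) = a" using q[of False False] e
    by (simp add: opmult_def sum_UNIV_bool complex_eq_iff)
  have dd: "d * d + (x * x + y * y) = d" using q[of True True] e
    by (simp add: opmult_def sum_UNIV_bool complex_eq_iff)
  have ad: "(a + d) * x = x" "(a + d) * y = y" using q[of False True] e
    by (simp_all add: opmult_def sum_UNIV_bool complex_eq_iff algebra_simps)
  have rank_one: "optrace P = 1 \<and> norm (bloch P) = 1" if "a + d = 1"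
  proof
    show "optrace P = 1" using that e by (simp add: optrace_qop flip: of_real_add)
    have "(2 * x)\<^sup>2 + (- 2 * y)\<^sup>2 + (2 * a - 1)\<^sup>2 = 1"
      using aa by (simp add: power2_eq_square algebra_simps)
    then show "norm (bloch P) = 1" unfolding norm_vec3 bloch_def using e by simp
  qed
  show ?thesis
  proof (cases "x = 0 \<and> y = 0")
    case False
    with ad have "a + d = 1" by (metis mult_cancel_right1)
    then show ?thesis using rank_one by blast
  next
    case True
    with aa dd have "a = 0 \<or> a = 1" "d = 0 \<or> d = 1" by (auto simp: algebra_simps)
    then consider "a + d = 1" | "a = 0" "d = 0" | "a = 1" "d = 1" by fastforce
    then show ?thesis
    proof cases
      case 1 then show ?thesis using rank_one by blast
    next
      case 2 then show ?thesis using e True by (auto simp: fun_eq_iff all_bool_eq complex_eq_iff)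
    next
      case 3 then show ?thesis using e True by (auto simp: fun_eq_iff all_bool_eq complex_eq_iff idop_def)
    qed
  qed
qed

lemma bloch_complement:
  assumes "\<And>i j. P i j + Q i j = idop i j" shows "bloch Q = - bloch P"
proof -
  have "Q i j = idop i j - P i j" for i j using assms[of i j] by (simp add: algebra_simps)
  then show ?thesis unfolding bloch_def by (simp add: vec_eq_iff forall_3 idop_def)
qed

lemma Pr_elem_entries:
  "Pr_elem r m s False False = (1 + (if s then 1 else -1) * complex_of_real r * complex_of_real (m$3)) / 2"
  "Pr_elem r m s True True = (1 - (if s then 1 else -1) * complex_of_real r * complex_of_real (m$3)) / 2"
  "Pr_elem r m s False True = (if s then 1 else -1) * complex_of_real r * Complex (m$1) (- m$2) / 2"
  "Pr_elem r m s True False = (if s then 1 else -1) * complex_of_real r * Complex (m$1) (m$2) / 2"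
  unfolding Pr_elem_def idop_def ndotsigma_def sigma_x_def sigma_y_def sigma_z_def
  by (simp_all add: complex_eq_iff)

lemma Pr_elem_uminus: "Pr_elem r (- m) s = Pr_elem r m (\<not> s)"
  unfolding qop_eq_iff Pr_elem_entries by (cases s) (simp_all add: complex_eq_iff)

lemma Pr_elem_add: "Pr_elem r m True a b + Pr_elem r m False a b = idop a b"
  unfolding Pr_elem_def by (simp add: field_simps)

lemma hermitian_Pr_elem: "hermitian (Pr_elem r m s)"
  unfolding hermitian_def all_bool_eq Pr_elem_entries by (cases s) (simp_all add: complex_eq_iff)

lemma optrace_Pr_elem: "optrace (Pr_elem r m s) = 1"
  unfolding optrace_qop Pr_elem_entries by (simp add: field_simps)

lemma bloch_Pr_elem: "bloch (Pr_elem r m s) = (if s then r else - r) *\<^sub>R m"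
  unfolding bloch_def Pr_elem_entries by (cases s) (simp_all add: vec_eq_iff forall_3 field_simps)

lemma Pr_elem_idempotent:
  assumes "norm m = 1" shows "opmult (Pr_elem 1 m s) (Pr_elem 1 m s) = Pr_elem 1 m s"
proof -
  have "(m$1)\<^sup>2 + (m$2)\<^sup>2 + (m$3)\<^sup>2 = 1"
    using assms unfolding norm_vec3 by simp
  then show ?thesis unfolding qop_eq_iff opmult_def sum_UNIV_bool Pr_elem_entries
    by (cases s; simp add: complex_eq_iff field_simps power2_eq_square; algebra)
qed

section \<open>The Werner assemblage\<close>

text \<open>The paper's \<open>\<sigma>\<^sub>a\<^sub>|\<^sub>x\<close> for \<open>\<omega>\<^sub>r\<close>, as a function of Alice's effect \<open>P = M\<^sub>a\<^sub>|\<^sub>x\<close>.\<close>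
definition steered :: "real \<Rightarrow> qop \<Rightarrow> qop" where
  "steered r P = ptrace_A (opmult (tensor P idop) (werner r))"

lemma assemblage_werner: "assemblage (werner r) M x a = steered r (M x a)"
  unfolding assemblage_def steered_def ..

lemma werner_entries:
  "werner r (i, j) (i', j') =
     complex_of_real r / 2 * (if i = j then 0 else if j then 1 else -1) * (if i' = j' then 0 else if j' then 1 else -1)
     + complex_of_real (1 - r) / 4 * idop (i, j) (i', j')"
proof -
  have "cnj (complex_of_real (1 / sqrt 2)) * complex_of_real (1 / sqrt 2) = 1 / 2"
    by (simp flip: of_real_mult)
  then show ?thesis
    unfolding werner_def psi_minus_def
    by (cases i; cases j; cases i'; cases j') (simp_all add: idop_def)
qed

lemma steered_entries:
  "steered r P j j' = complex_of_real r / 2 * (if j then 1 else -1) * (if j' then 1 else -1) * P (\<not> j') (\<not> j)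
     + complex_of_real (1 - r) / 4 * optrace P * (if j = j' then 1 else 0)"
  unfolding steered_def ptrace_A_def opmult_def tensor_def optrace_qop
  by (cases j; cases j'; simp add: sum_UNIV_bool_pair sum_UNIV_bool werner_entries idop_def field_simps)

text \<open>The singlet anticorrelates Bloch vectors.\<close>
lemma steered_rank_one:
  assumes "hermitian P" "optrace P = 1"
  shows "steered r P = (\<lambda>a b. Pr_elem r (bloch P) False a b / 2)"
proof -
  obtain a d x y where e: "P False False = complex_of_real a" "P True True = complex_of_real d"
    "P False True = Complex x y" "P True False = Complex x (- y)"
    using hermitian_entries[OF assms(1)] .
  have d: "P True True = complex_of_real (1 - a)"
    using e assms(2) by (simp add: optrace_qop complex_eq_iff)
  show ?thesis
    unfolding qop_eq_iff steered_entries Pr_elem_entries bloch_def assms(2)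
    by (simp add: e(1,3,4) d) (simp add: complex_eq_iff field_simps)
qed

lemma steered_zero: "steered r (\<lambda>_ _. 0) = (\<lambda>_ _. 0)"
  unfolding qop_eq_iff steered_entries by (simp add: optrace_qop)

lemma steered_idop: "steered r idop = (\<lambda>a b. idop a b / 2)"
  unfolding qop_eq_iff steered_entries by (simp add: optrace_qop idop_def field_simps)

section \<open>From a simulation of \<open>\<P>\<^sub>r\<close> to LHS models\<close>

lemma is_povm_sum: "is_povm n P \<Longrightarrow> (\<Sum>i<n. P i a b) = idop a b"
  unfolding is_povm_def by (metis (mono_tags, lifting))

lemma is_povm_psd: "is_povm n P \<Longrightarrow> i < n \<Longrightarrow> psd (P i)"
  unfolding is_povm_def by blast

lemma povm_weighted_states:
  assumes "is_povm n (Pv :: nat \<Rightarrow> qop)"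
  obtains p \<rho>B where "\<And>i. i < n \<Longrightarrow> 0 \<le> p i" "(\<Sum>i<n. p i) = 1"
    "\<And>i. i < n \<Longrightarrow> is_state (\<rho>B i)"
    "\<And>i a b. i < n \<Longrightarrow> complex_of_real (p i) * \<rho>B i a b = Pv i a b / 2"
proof
  note psd = is_povm_psd[OF assms]
  define p where "p i = Re (optrace (Pv i)) / 2" for i
  define \<rho>B where "\<rho>B i = (if p i = 0 then (\<lambda>a b. complex_of_real (1/2) * idop a b)
       else (\<lambda>a b. complex_of_real (1 / (2 * p i)) * Pv i a b))" for i
  have tr: "optrace (Pv i) = complex_of_real (2 * p i)" if "i < n" for i
    using psd_trace_real[OF psd[OF that]] unfolding p_def by simp
  show p_nonneg: "0 \<le> p i" if "i < n" for i
    using psd_diag(2)[OF psd[OF that]] unfolding p_def optrace_qop by simp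
  have "(\<Sum>i<n. complex_of_real (2 * p i)) = (\<Sum>i<n. optrace (Pv i))"
    using tr by simp
  also have "\<dots> = 2"
    by (simp add: optrace_qop sum.distrib is_povm_sum[OF assms] idop_def)
  finally show "(\<Sum>i<n. p i) = 1"
    by (simp add: sum_distrib_left[symmetric] flip: of_real_sum)
  show "complex_of_real (p i) * \<rho>B i a b = Pv i a b / 2" if "i < n" for i a b
  proof (cases "p i = 0")
    case True
    with tr[OF that] have "Pv i = (\<lambda>_ _. 0)" by (intro psd_trace_zero psd that) simp
    with True show ?thesis by simp
  qed (simp add: \<rho>B_def field_simps)
  show "is_state (\<rho>B i)" if "i < n" for i
  proof (cases "p i = 0")
    case True
    then show ?thesis using psd_scale[OF psd_idop, of "1/2"]
      unfolding is_state_def \<rho>B_def by (simp add: optrace_qop idop_def)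
  next
    case False
    with p_nonneg[OF that] have "0 < p i" by simp
    then have "psd (\<rho>B i)" using psd_scale[OF psd[OF that], of "1 / (2 * p i)"] False
      unfolding \<rho>B_def by simp
    moreover have "optrace (\<rho>B i) = 1"
      using tr[OF that] False
      by (simp add: \<rho>B_def optrace_qop add_divide_distrib[symmetric] flip: of_real_mult)
    ultimately show ?thesis unfolding is_state_def by blast
  qed
qed

text \<open>Averaging the responses to \<open>\<plusminus>m\<close> makes the responses to antipodal directions complementary.\<close>
lemma simulates_Pr_antipodal_response:
  assumes "simulates_Pr r n Pv"
  obtains c where "\<And>m i. norm m = 1 \<Longrightarrow> i < n \<Longrightarrow> 0 \<le> c m i"
    "\<And>m i. norm m = 1 \<Longrightarrow> i < n \<Longrightarrow> c m i + c (- m) i = 1"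
    "\<And>m. norm m = 1 \<Longrightarrow> Pr_elem r m False = (\<lambda>a b. \<Sum>i<n. complex_of_real (c m i) * Pv i a b)"
proof -
  obtain p :: "real^3 \<Rightarrow> bool \<Rightarrow> nat \<Rightarrow> real" where p:
    "\<And>m. norm m = 1 \<Longrightarrow> (\<forall>i<n. (\<forall>s. 0 \<le> p m s i) \<and> p m True i + p m False i = 1) \<and>
       (\<forall>s. Pr_elem r m s = (\<lambda>a b. \<Sum>i<n. complex_of_real (p m s i) * Pv i a b))"
    using assms unfolding simulates_Pr_def by blast
  define c where "c m i = (p m False i + p (- m) True i) / 2" for m i
  show ?thesis
  proof (rule that)
    fix m :: "real^3" and i assume m: "norm m = 1" and i: "i < n"
    then have m': "norm (- m) = 1" by simp
    have "\<forall>s. 0 \<le> p m s i" "\<forall>s. 0 \<le> p (- m) s i"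
      "p m True i + p m False i = 1" "p (- m) True i + p (- m) False i = 1"
      using p[OF m] p[OF m'] i by auto
    then show "0 \<le> c m i" "c m i + c (- m) i = 1"
      unfolding c_def by (simp_all add: add_nonneg_nonneg field_simps)
  next
    fix m :: "real^3" assume m: "norm m = 1"
    then have m': "norm (- m) = 1" by simp
    have "Pr_elem r m False a b = (Pr_elem r m False a b + Pr_elem r (- m) True a b) / 2" for a b
      by (simp add: Pr_elem_uminus)
    also have "\<dots> a b = ((\<Sum>i<n. complex_of_real (p m False i) * Pv i a b)
        + (\<Sum>i<n. complex_of_real (p (- m) True i) * Pv i a b)) / 2" for a b
      using p[OF m] p[OF m'] by simp
    also have "\<dots> a b = (\<Sum>i<n. complex_of_real (c m i) * Pv i a b)" for a b
      unfolding c_def sum.distrib[symmetric] sum_divide_distrib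
      by (simp add: add_divide_distrib distrib_right)
    finally show "Pr_elem r m False = (\<lambda>a b. \<Sum>i<n. complex_of_real (c m i) * Pv i a b)"
      by auto
  qed
qed

lemma sum_in_012_eq_2_cases:
  fixes T :: "'a \<Rightarrow> real"
  assumes "finite A" "\<forall>a\<in>A. T a \<in> {0, 1, 2}" "sum T A = 2"
  obtains a where "a \<in> A" "T a = 2" "\<forall>c\<in>A - {a}. T c = 0"
    | a b where "a \<in> A" "b \<in> A" "a \<noteq> b" "T a = 1" "T b = 1" "\<forall>c\<in>A - {a, b}. T c = 0"
proof (cases "\<exists>a\<in>A. T a = 2")
  case True
  then obtain a where a: "a \<in> A" "T a = 2" by blast
  have "sum T (A - {a}) = 0" using assms(1,3) a by (simp add: sum.remove)
  moreover have "\<forall>c\<in>A - {a}. 0 \<le> T c" using assms(2) by force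
  ultimately have "\<forall>c\<in>A - {a}. T c = 0"
    using sum_nonneg_eq_0_iff[of "A - {a}" T] assms(1) by simp
  with a show ?thesis by (rule that(1))
next
  case False
  with assms(2) have T01: "\<forall>a\<in>A. T a = 0 \<or> T a = 1" by auto
  define S where "S = {a\<in>A. T a = 1}"
  have "sum T A = (\<Sum>a\<in>A. if a \<in> S then 1 else 0)"
    using T01 unfolding S_def by (intro sum.cong) auto
  also have "\<dots> = real (card S)"
    using assms(1) by (simp add: sum.If_cases S_def Int_def)
  finally have "card S = 2" using assms(3) by simp
  then obtain a b where ab: "a \<noteq> b" "S = {a, b}" by (meson card_2_iff)
  then have "a \<in> S" "b \<in> S" by simp_all
  then have "a \<in> A" "b \<in> A" "T a = 1" "T b = 1" unfolding S_def by simp_all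
  moreover have "\<forall>c\<in>A - {a, b}. T c = 0"
  proof
    fix c assume c: "c \<in> A - {a, b}"
    then have "c \<notin> S" using ab(2) by blast
    with c T01 show "T c = 0" unfolding S_def by blast
  qed
  ultimately show ?thesis using ab(1) by (intro that(2))
qed

lemma sum_eq_pair:
  assumes "finite A" "a \<in> A" "b \<in> A" "a \<noteq> b" "\<forall>c\<in>A - {a, b}. f c = 0"
  shows "sum f A = f a + f b"
proof -
  have "sum f A = sum f {a, b}"
    using assms by (intro sum.mono_neutral_right) auto
  with assms(4) show ?thesis by simp
qed

text \<open>By \<open>projector_cases\<close>, \<open>Re (tr P) = 1\<close> singles out the rank-one projectors; the
  otherwise-branch gives \<open>0\<close> for \<open>P = 0\<close> and \<open>1\<close> for \<open>P = I\<close>.\<close>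
definition projector_response :: "(real^3 \<Rightarrow> nat \<Rightarrow> real) \<Rightarrow> qop \<Rightarrow> nat \<Rightarrow> real" where
  "projector_response c P i = (if Re (optrace P) = 1 then c (bloch P) i else Re (optrace P) / 2)"

lemma projector_response_nonneg:
  assumes "hermitian P" "opmult P P = P" "\<And>m. norm m = 1 \<Longrightarrow> 0 \<le> c m i"
  shows "0 \<le> projector_response c P i"
  using projector_cases[OF assms(1,2)] assms(3)
  by (auto simp: projector_response_def optrace_idop optrace_zero)

lemma steered_projector_response:
  assumes "hermitian P" "opmult P P = P" "is_povm n Pv"
    and c: "\<And>m. norm m = 1 \<Longrightarrow> Pr_elem r m False = (\<lambda>a b. \<Sum>i<n. complex_of_real (c m i) * Pv i a b)"
  shows "steered r P = (\<lambda>a b. (\<Sum>i<n. complex_of_real (projector_response c P i) * Pv i a b) / 2)"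
  using projector_cases[OF assms(1,2)]
proof (elim disjE conjE)
  assume "optrace P = 1" "norm (bloch P) = 1"
  then show ?thesis
    by (simp add: steered_rank_one assms(1) c projector_response_def)
next
  assume "P = (\<lambda>_ _. 0)"
  then show ?thesis by (simp add: steered_zero projector_response_def optrace_zero)
next
  assume "P = idop"
  then show ?thesis
    by (simp add: steered_idop projector_response_def optrace_idop is_povm_sum[OF assms(3)])
qed

lemma projector_response_sum:
  assumes povm: "is_povm k M" and proj: "\<forall>a<k. opmult (M a) (M a) = M a"
    and c: "\<And>m. norm m = 1 \<Longrightarrow> c m i + c (- m) i = 1"
  shows "(\<Sum>a<k. projector_response c (M a) i) = 1"
proof -
  define T where "T a = Re (optrace (M a))" for a
  have kinds: "(T a = 1 \<and> norm (bloch (M a)) = 1) \<or> (T a = 0 \<and> M a = (\<lambda>_ _. 0)) \<or> (T a = 2 \<and> M a = idop)"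
    if "a < k" for a
    using projector_cases[OF psd_hermitian[OF is_povm_psd[OF povm that]]] proj that
    unfolding T_def by (auto simp: optrace_idop optrace_zero)
  then have T012: "\<forall>a\<in>{..<k}. T a \<in> {0, 1, 2}" by fastforce
  have "sum T {..<k} = Re (\<Sum>a<k. M a False False + M a True True)"
    by (simp add: T_def optrace_qop)
  also have "\<dots> = 2"
    by (simp add: sum.distrib is_povm_sum[OF povm] idop_def)
  finally have sum_T: "sum T {..<k} = 2" .
  from finite_lessThan T012 sum_T show ?thesis
  proof (cases rule: sum_in_012_eq_2_cases)
    case (1 a)
    then have "\<forall>d\<in>{..<k}. T d \<noteq> 1" by force
    then have "(\<Sum>a<k. projector_response c (M a) i) = (\<Sum>a<k. T a / 2)"
      by (simp add: projector_response_def T_def)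
    with sum_T show ?thesis by (simp add: sum_divide_distrib[symmetric])
  next
    case (2 a b)
    then have rest: "\<forall>d\<in>{..<k} - {a, b}. M d = (\<lambda>_ _. 0)" using kinds by fastforce
    have "M a u v + M b u v = idop u v" for u v
      using sum_eq_pair[OF finite_lessThan 2(1-3), of "\<lambda>d. M d u v"] rest is_povm_sum[OF povm]
      by simp
    then have "bloch (M b) = - bloch (M a)" by (rule bloch_complement)
    have "(\<Sum>d<k. projector_response c (M d) i)
        = projector_response c (M a) i + projector_response c (M b) i"
      using rest by (intro sum_eq_pair[OF finite_lessThan 2(1-3)])
        (simp add: projector_response_def optrace_zero)
    also have "\<dots> = c (bloch (M a)) i + c (- bloch (M a)) i"
      using 2 \<open>bloch (M b) = - bloch (M a)\<close> by (simp add: projector_response_def T_def)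
    also have "\<dots> = 1"
      using kinds 2 c by fastforce
    finally show ?thesis .
  qed
qed

lemma has_LHS_model_werner_projective:
  assumes sim: "simulates_Pr r n Pv" and proj: "projective_family X k M"
  shows "has_LHS_model (werner r) X k M n"
proof -
  have povm: "is_povm n Pv" using sim unfolding simulates_Pr_def by blast
  obtain p \<rho>B where p: "\<And>i. i < n \<Longrightarrow> 0 \<le> p i" "(\<Sum>i<n. p i) = 1"
    and \<rho>B: "\<And>i. i < n \<Longrightarrow> is_state (\<rho>B i)"
    and Pv: "\<And>i a b. i < n \<Longrightarrow> complex_of_real (p i) * \<rho>B i a b = Pv i a b / 2"
    using povm_weighted_states[OF povm] by blast
  obtain c where c_nonneg: "\<And>m i. norm m = 1 \<Longrightarrow> i < n \<Longrightarrow> 0 \<le> c m i"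
    and c_antipodal: "\<And>m i. norm m = 1 \<Longrightarrow> i < n \<Longrightarrow> c m i + c (- m) i = 1"
    and c_sim: "\<And>m. norm m = 1 \<Longrightarrow> Pr_elem r m False = (\<lambda>a b. \<Sum>i<n. complex_of_real (c m i) * Pv i a b)"
    using simulates_Pr_antipodal_response[OF sim] by blast
  have M_povm: "is_povm (k x) (M x)" and M_idem: "\<forall>a<k x. opmult (M x a) (M x a) = M x a"
    if "x \<in> X" for x
    using proj that unfolding projective_family_def povm_family_def by blast+
  have M_herm: "hermitian (M x a)" if "x \<in> X" "a < k x" for x a
    using psd_hermitian[OF is_povm_psd[OF M_povm]] that .
  show ?thesis
    unfolding has_LHS_model_def
  proof (intro exI[of _ p] exI[of _ \<rho>B] exI[of _ "\<lambda>x a. projector_response c (M x a)"] conjI ballI allI impI)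
    fix x i assume x: "x \<in> X" and i: "i < n"
    show "0 \<le> projector_response c (M x a) i" if "a < k x" for a
      using projector_response_nonneg[OF M_herm[OF x that]] M_idem[OF x] that c_nonneg i by blast
    show "(\<Sum>a<k x. projector_response c (M x a) i) = 1"
      using projector_response_sum[OF M_povm[OF x] M_idem[OF x]] c_antipodal i by blast
  next
    fix x a assume x: "x \<in> X" and a: "a < k x"
    have "assemblage (werner r) M x a
        = (\<lambda>u v. (\<Sum>i<n. complex_of_real (projector_response c (M x a) i) * Pv i u v) / 2)"
      unfolding assemblage_werner
      using steered_projector_response[OF M_herm[OF x a] _ povm c_sim] M_idem[OF x] a by blast
    also have "\<dots> = (\<lambda>u v. \<Sum>i<n. complex_of_real (projector_response c (M x a) i * p i) * \<rho>B i u v)"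
      by (auto simp: sum_divide_distrib mult.assoc Pv intro!: sum.cong)
    finally show "assemblage (werner r) M x a =
        (\<lambda>u v. \<Sum>i<n. complex_of_real (projector_response c (M x a) i * p i) * \<rho>B i u v)" .
  qed (use p \<rho>B in auto)
qed

section \<open>From LHS models to a simulation of \<open>\<P>\<^sub>r\<close>\<close>

definition sharp_measurement :: "real^3 \<Rightarrow> nat \<Rightarrow> qop" where
  "sharp_measurement m a = Pr_elem 1 m (a = 0)"

lemma is_povm_sharp_measurement:
  assumes "norm m = 1" shows "is_povm 2 (sharp_measurement m)"
  unfolding is_povm_def
proof
  show "\<forall>a<2. psd (sharp_measurement m a)"
    unfolding sharp_measurement_def
    using hermitian_idempotent_psd[OF hermitian_Pr_elem Pr_elem_idempotent[OF assms]] by blast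
  show "(\<lambda>u v. \<Sum>a<2. sharp_measurement m a u v) = idop"
    by (simp add: sharp_measurement_def numeral_2_eq_2 fun_eq_iff) (metis Pr_elem_add add.commute)
qed

lemma steered_sharp_measurement:
  "steered r (sharp_measurement m a) = (\<lambda>u v. Pr_elem r m (a \<noteq> 0) u v / 2)"
  unfolding sharp_measurement_def
  by (simp add: steered_rank_one hermitian_Pr_elem optrace_Pr_elem bloch_Pr_elem Pr_elem_uminus)

lemma simulates_Pr_of_LHS_model:
  assumes "has_LHS_model (werner r) {(2, sharp_measurement m) | m. norm m = 1} fst snd n"
  shows "\<exists>Pv. simulates_Pr r n Pv"
proof -
  let ?X = "{(2::nat, sharp_measurement m) | m. norm m = 1}"
  obtain p \<rho>B q where p: "\<forall>i<n. 0 \<le> p i" and \<rho>B: "\<forall>i<n. is_state (\<rho>B i)"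
    and q: "\<forall>x\<in>?X. \<forall>i<n. (\<forall>a<fst x. 0 \<le> q x a i) \<and> (\<Sum>a<fst x. q x a i) = 1"
    and model: "\<forall>x\<in>?X. \<forall>a<fst x. assemblage (werner r) snd x a =
            (\<lambda>u v. \<Sum>i<n. complex_of_real (q x a i * p i) * \<rho>B i u v)"
    using assms unfolding has_LHS_model_def by blast
  define Pv where "Pv i = (\<lambda>u v. complex_of_real (2 * p i) * \<rho>B i u v)" for i
  define resp where "resp m s = q (2, sharp_measurement m) (if s then 1 else 0)" for m s
  have resp: "0 \<le> resp m s i" "resp m True i + resp m False i = 1"
    if "norm m = 1" "i < n" for m s i
  proof -
    have "(2, sharp_measurement m) \<in> ?X" using that(1) by blast
    with q that(2) have "\<forall>a<2. 0 \<le> q (2, sharp_measurement m) a i"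
      "(\<Sum>a<2. q (2, sharp_measurement m) a i) = 1" by auto
    then show "0 \<le> resp m s i" "resp m True i + resp m False i = 1"
      unfolding resp_def by (simp_all add: numeral_2_eq_2)
  qed
  have Pr: "Pr_elem r m s = (\<lambda>u v. \<Sum>i<n. complex_of_real (resp m s i) * Pv i u v)"
    if "norm m = 1" for m s
  proof -
    have "(2, sharp_measurement m) \<in> ?X" using that by blast
    with model have "steered r (sharp_measurement m (if s then 1 else 0))
        = (\<lambda>u v. \<Sum>i<n. complex_of_real (resp m s i * p i) * \<rho>B i u v)"
      unfolding resp_def assemblage_werner by fastforce
    then show ?thesis
      unfolding steered_sharp_measurement Pv_def
      by (cases s) (auto simp: fun_eq_iff sum_distrib_left mult_ac)
  qed
  have "is_povm n Pv"
    unfolding is_povm_def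
  proof
    show "\<forall>i<n. psd (Pv i)"
    proof (intro allI impI)
      fix i assume "i < n"
      with p \<rho>B have "psd (\<rho>B i)" "0 \<le> 2 * p i" unfolding is_state_def by auto
      then show "psd (Pv i)" unfolding Pv_def by (rule psd_scale)
    qed
    have e1: "norm (axis 1 1 :: real^3) = 1" by simp
    have "idop u v = Pr_elem r (axis 1 1) True u v + Pr_elem r (axis 1 1) False u v" for u v
      by (simp add: Pr_elem_add)
    also have "\<dots> u v = (\<Sum>i<n. Pv i u v)" for u v
      using resp(2)[OF e1] by (simp add: Pr[OF e1] sum.distrib[symmetric] distrib_right[symmetric]
          flip: of_real_add)
    finally show "(\<lambda>u v. \<Sum>i<n. Pv i u v) = idop" by (simp add: fun_eq_iff)
  qed
  with resp Pr show ?thesis unfolding simulates_Pr_def by blast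
qed

lemma N_sim_le_gamma_werner: "N_sim r \<le> gamma (werner r)"
  unfolding gamma_def
proof (rule INF_greatest)
  fix n assume "n \<in> {n. n \<ge> 1 \<and> (\<forall>(X :: (nat \<times> (nat \<Rightarrow> qop)) set) k M.
       povm_family X k M \<longrightarrow> has_LHS_model (werner r) X k M n)}"
  then have "n \<ge> 1" and gamma: "\<And>(X :: (nat \<times> (nat \<Rightarrow> qop)) set) k M.
      povm_family X k M \<Longrightarrow> has_LHS_model (werner r) X k M n"
    by auto
  have "povm_family {(2, sharp_measurement m) | m. norm m = 1} fst snd"
    using is_povm_sharp_measurement unfolding povm_family_def by auto
  then have "has_LHS_model (werner r) {(2, sharp_measurement m) | m. norm m = 1} fst snd n"
    by (rule gamma)
  with \<open>n \<ge> 1\<close> have "n \<in> {n. n \<ge> 1 \<and> (\<exists>Pv. simulates_Pr r n Pv)}"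
    using simulates_Pr_of_LHS_model by blast
  then show "N_sim r \<le> enat n" unfolding N_sim_def by (rule INF_lower)
qed

lemma N_sim_attained:
  assumes "N_sim r \<noteq> \<infinity>"
  obtains Pv where "simulates_Pr r (the_enat (N_sim r)) Pv"
proof -
  define S where "S = {n. n \<ge> 1 \<and> (\<exists>Pv. simulates_Pr r n Pv)}"
  have N: "N_sim r = Inf (enat ` S)" unfolding N_sim_def S_def ..
  with assms have "enat ` S \<noteq> {}" by (auto simp: top_enat_def)
  then have "Inf (enat ` S) \<in> enat ` S" unfolding Inf_enat_def by (auto intro: LeastI)
  then obtain n where "n \<in> S" "N_sim r = enat n" unfolding N by blast
  with that show thesis unfolding S_def by auto
qed

theorem proposition1:
  fixes r :: real
  assumes "0 \<le> r" and "r \<le> 1 / 2"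
  shows "(\<forall>(X :: 'x set) (k :: 'x \<Rightarrow> nat) (M :: 'x \<Rightarrow> nat \<Rightarrow> qop).
            projective_family X k M \<and> N_sim r \<noteq> \<infinity> \<longrightarrow>
              has_LHS_model (werner r) X k M (the_enat (N_sim r)))
         \<and> N_sim r \<le> gamma (werner r)"
proof (intro conjI allI impI)
  fix X :: "'x set" and k M
  assume "projective_family X k M \<and> N_sim r \<noteq> \<infinity>"
  then show "has_LHS_model (werner r) X k M (the_enat (N_sim r))"
    using N_sim_attained has_LHS_model_werner_projective by metis
qed (rule N_sim_le_gamma_werner)

end
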